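(* An $\mathbb{F}_q$-linear automorphism $\varphi$ of $\mathbb{F}_{q^m}$ is fully linear over $\mathbb{F}_{q^m}$ if and only if there exist $\beta\in\mathbb{F}_{q^m}^*$ and $j\in\{0,1,\dots,m-1\}$ such that $\varphi(\mu)=\beta\,\mu^{q^j}$ for all $\mu\in\mathbb{F}_{q^m}$.
   Context: $q$ is a prime power (the paper takes $q$ a power of $2$). An $\mathbb{F}_q$-linear automorphism of $\mathbb{F}_{q^m}$ is a bijective $\mathbb{F}_q$-linear map $\varphi:\mathbb{F}_{q^m}\to\mathbb{F}_{q^m}$, applied componentwise to vectors. For an $\mathbb{F}_{q^m}$-linear code $\mathcal{C}\subseteq\mathbb{F}_{q^m}^n$, $\varphi$ is linear on $\mathcal{C}$ if $\varphi(\mathcal{C})=\{\varphi(\bm{c}):\bm{c}\in\mathcal{C}\}$ is an $\mathbb{F}_{q^m}$-linear subspace. $\varphi$ is fully linear over $\mathbb{F}_{q^m}$ if it is linear on every $\mathbb{F}_{q^m}$-linear code of every length $n\ge1$. *)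

theory Defs
  imports Main
begin

definition is_subfield :: "'a::field set \<Rightarrow> bool" where
  "is_subfield K \<longleftrightarrow> 0 \<in> K \<and> 1 \<in> K \<and>
     (\<forall>x\<in>K. \<forall>y\<in>K. x + y \<in> K \<and> x * y \<in> K) \<and>
     (\<forall>x\<in>K. - x \<in> K) \<and> (\<forall>x\<in>K. x \<noteq> 0 \<longrightarrow> inverse x \<in> K)"

definition lin_aut :: "'a::field set \<Rightarrow> ('a \<Rightarrow> 'a) \<Rightarrow> bool" where
  "lin_aut K \<phi> \<longleftrightarrow> bij \<phi> \<and> (\<forall>x y. \<phi> (x + y) = \<phi> x + \<phi> y) \<and>
     (\<forall>c\<in>K. \<forall>x. \<phi> (c * x) = c * \<phi> x)"

text \<open>Vectors of length n over 'a are lists of length n; a linear code of length n is an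
  'a-linear subspace of the set of such lists.\<close>
definition vadd :: "'a::field list \<Rightarrow> 'a list \<Rightarrow> 'a list" where
  "vadd u v = map2 (+) u v"

definition vsmult :: "'a::field \<Rightarrow> 'a list \<Rightarrow> 'a list" where
  "vsmult a v = map (\<lambda>x. a * x) v"

definition is_subspace :: "nat \<Rightarrow> 'a::field list set \<Rightarrow> bool" where
  "is_subspace n C \<longleftrightarrow> C \<subseteq> {v. length v = n} \<and> replicate n 0 \<in> C \<and>
     (\<forall>u\<in>C. \<forall>v\<in>C. vadd u v \<in> C) \<and> (\<forall>a. \<forall>v\<in>C. vsmult a v \<in> C)"

definition linear_on_code :: "('a::field \<Rightarrow> 'a) \<Rightarrow> nat \<Rightarrow> 'a list set \<Rightarrow> bool" where
  "linear_on_code \<phi> n C \<longleftrightarrow> is_subspace n ((map \<phi>) ` C)"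

definition fully_linear :: "('a::field \<Rightarrow> 'a) \<Rightarrow> bool" where
  "fully_linear \<phi> \<longleftrightarrow> (\<forall>n\<ge>1. \<forall>C. is_subspace n C \<longrightarrow> linear_on_code \<phi> n C)"

end

theory Submission
  imports Defs "HOL-Algebra.Multiplicative_Group" "HOL-Algebra.Algebraic_Closure_Type" "HOL-Number_Theory.Cong"
begin

text \<open>
  Applying full linearity to the codes \<open>{(a, a x)}\<close> gives \<open>\<phi>(a x) \<phi>(1) = \<phi>(a) \<phi>(x)\<close>, so
  \<open>\<psi> = \<phi> / \<phi>(1)\<close> is a field automorphism fixing \<open>K\<close>. As \<open>q\<close> is a power of the characteristic,
  \<open>x \<mapsto> x^q\<close> is a field endomorphism with fixed field \<open>K\<close>; it permutes the roots \<open>g^(q^j)\<close>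
  (\<open>j < m\<close>) of \<open>f = \<Prod>\<^sub>j (X - g^(q^j))\<close> cyclically, so \<open>f\<close> has coefficients in \<open>K\<close>. Hence
  \<open>\<psi>(g)\<close> is again a root of \<open>f\<close>, and choosing \<open>g\<close> to generate the multiplicative group makes
  \<open>\<psi>\<close> a power of the Frobenius. Conversely, if \<open>\<phi>(\<mu>) = \<beta> \<mu>^(q^j)\<close>, scaling an image vector
  by \<open>a\<close> is the image of scaling the original vector by the \<open>q^j\<close>-th root of \<open>a\<close>.
\<close>

lemma of_nat_mult_mem:
  fixes B :: "'a::semiring_1 set"
  assumes "0 \<in> B" "\<forall>x\<in>B. \<forall>y\<in>B. x + y \<in> B" "x \<in> B"
  shows "of_nat n * x \<in> B"
  using assms by (induction n) (auto simp: distrib_right)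

lemma uminus_mem_if_add_closed:
  fixes B :: "'a::ring_1 set"
  assumes "CHAR('a) > 0" "0 \<in> B" "\<forall>x\<in>B. \<forall>y\<in>B. x + y \<in> B" "x \<in> B"
  shows "- x \<in> B"
proof -
  have "of_nat (CHAR('a) - 1) * x + x = of_nat CHAR('a) * x"
    using assms(1) by (simp add: distrib_right)
  then have "- x = of_nat (CHAR('a) - 1) * x"
    by (simp add: add_eq_0_iff2)
  then show ?thesis using of_nat_mult_mem[OF assms(2-4)] by simp
qed

lemma card_add_closed_extend:
  fixes B :: "'a::ring_1 set"
  assumes p: "prime CHAR('a)" and "finite B" and B0: "0 \<in> B"
    and Badd: "\<forall>x\<in>B. \<forall>y\<in>B. x + y \<in> B" and x: "x \<notin> B"
  defines "B' \<equiv> (\<lambda>(b, i). b + of_nat i * x) ` (B \<times> {..<CHAR('a)})"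
  shows "0 \<in> B'" and "\<forall>u\<in>B'. \<forall>v\<in>B'. u + v \<in> B'" and "card B' = CHAR('a) * card B"
proof -
  let ?p = "CHAR('a)"
  have p2: "?p \<ge> 2" using prime_ge_2_nat[OF p] .
  show "0 \<in> B'" unfolding B'_def using B0 p2 by (intro image_eqI[of _ _ "(0, 0)"]) auto
  show "\<forall>u\<in>B'. \<forall>v\<in>B'. u + v \<in> B'"
  proof (intro ballI)
    fix u v assume "u \<in> B'" "v \<in> B'"
    then obtain b i b' i' where bi: "b \<in> B" "b' \<in> B" and uv: "u = b + of_nat i * x" "v = b' + of_nat i' * x"
      by (auto simp: B'_def)
    have "(of_nat ((i + i') mod ?p) :: 'a) = of_nat (i + i')"
      by (simp only: of_nat_eq_iff_cong_CHAR) (simp add: cong_def)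
    then have "u + v = b + b' + of_nat ((i + i') mod ?p) * x"
      by (simp add: uv algebra_simps)
    then show "u + v \<in> B'" unfolding B'_def using bi Badd p2
      by (intro image_eqI[of _ _ "(b + b', (i + i') mod ?p)"]) auto
  qed
  have idx_eq: "i = i'" if "b \<in> B" "b' \<in> B" "i' < i" "i < ?p"
      and eq: "b + of_nat i * x = b' + of_nat i' * x" for b b' i i'
  proof -
    define d where "d = i - i'"
    have "of_nat d * x = b' + - b" using eq that by (simp add: d_def of_nat_diff algebra_simps)
    also have "\<dots> \<in> B"
      using Badd that uminus_mem_if_add_closed[OF prime_gt_0_nat[OF p] B0 Badd] by blast
    finally have dx: "of_nat d * x \<in> B" .
    have "\<not> ?p dvd d" using that by (auto simp: d_def dest: dvd_imp_le)
    then have "coprime d ?p" using prime_imp_coprime[OF p] coprime_commute by blast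
    then obtain e where "[d * e = 1] (mod ?p)" using cong_solve_coprime_nat by auto
    then have "(of_nat (e * d) :: 'a) = of_nat 1" by (simp only: of_nat_eq_iff_cong_CHAR mult.commute)
    then have "x = of_nat e * (of_nat d * x)" by (simp flip: mult.assoc of_nat_mult)
    then have "x \<in> B" using of_nat_mult_mem[OF B0 Badd dx] by metis
    then show ?thesis using x by simp
  qed
  have "inj_on (\<lambda>(b, i). b + of_nat i * x) (B \<times> {..<?p})"
  proof (rule inj_onI, clarsimp)
    fix b i b' i' assume "b \<in> B" "b' \<in> B" "i < ?p" "i' < ?p" and eq: "b + of_nat i * x = b' + of_nat i' * x"
    then have "i = i'" using idx_eq[of b b' i' i] idx_eq[of b' b i i'] by (cases i i' rule: linorder_cases) auto
    then show "b = b' \<and> i = i'" using eq by simp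
  qed
  then show "card B' = ?p * card B"
    unfolding B'_def by (simp add: card_image card_cartesian_product)
qed

lemma card_add_closed_CHAR_power:
  fixes S :: "'a::ring_1 set"
  assumes p: "prime CHAR('a)" and "finite S" and S0: "0 \<in> S" and Sadd: "\<forall>x\<in>S. \<forall>y\<in>S. x + y \<in> S"
  shows "\<exists>k. card S = CHAR('a) ^ k"
proof -
  have "\<exists>k. card S = CHAR('a) ^ k * card B"
    if "B \<subseteq> S" "0 \<in> B" "\<forall>x\<in>B. \<forall>y\<in>B. x + y \<in> B" for B
    using that
  proof (induction "card S - card B" arbitrary: B rule: less_induct)
    case less
    show ?case
    proof (cases "B = S")
      case False
      then obtain x where x: "x \<in> S" "x \<notin> B" using less.prems by blast
      have fin: "finite B" using less.prems(1) \<open>finite S\<close> finite_subset by blast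
      define B' where "B' = (\<lambda>(b, i). b + of_nat i * x) ` (B \<times> {..<CHAR('a)})"
      note B' = card_add_closed_extend[OF p fin less.prems(2,3) x(2), folded B'_def]
      have "B' \<subseteq> S"
        using less.prems(1) of_nat_mult_mem[OF S0 Sadd x(1)] Sadd by (auto simp: B'_def)
      moreover have "card B < card B'"
        using B'(3) prime_ge_2_nat[OF p] less.prems(2) fin card_gt_0_iff[of B] by auto
      ultimately have "card S - card B' < card S - card B"
        using card_mono[OF \<open>finite S\<close>] by (meson diff_less_mono2 order_less_le_trans)
      from less.hyps[OF this \<open>B' \<subseteq> S\<close> B'(1,2)] B'(3) show ?thesis
        by (metis mult.assoc mult.commute power_Suc)
    qed (intro exI[of _ 0], simp)
  qed
  from this[of "{0}"] S0 show ?thesis by simp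
qed

lemma power_card_mult_closed:
  fixes S :: "'a::field set"
  assumes "finite S" "0 \<in> S" and mult: "\<forall>x\<in>S. \<forall>y\<in>S. x * y \<in> S"
    and inv: "\<forall>x\<in>S. inverse x \<in> S" and "x \<in> S"
  shows "x ^ card S = x"
proof (cases "x = 0")
  case True
  then show ?thesis using assms(1,2) card_gt_0_iff[of S] by auto
next
  case False
  have "(\<Prod>y\<in>S-{0}. x * y) = (\<Prod>y\<in>S-{0}. y)"
    by (rule prod.reindex_bij_witness[of _ "\<lambda>y. y / x" "\<lambda>y. x * y"])
       (use False mult inv \<open>x \<in> S\<close> in \<open>auto simp: divide_inverse\<close>)
  then have "x ^ card (S - {0}) = 1" using assms(1) by (simp add: prod.distrib)
  moreover have "card S = Suc (card (S - {0}))" using assms(1,2) by (rule card.remove)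
  ultimately show ?thesis by simp
qed

lemma finite_field_has_generator:
  "\<exists>g::'a::{finite,field}. \<forall>y. y \<noteq> 0 \<longrightarrow> (\<exists>i::nat. y = g ^ i)"
proof -
  interpret R: field "ring_of_type_algebra :: 'a ring" by rule
  have power_eq: "x [^]\<^bsub>ring_of_type_algebra\<^esub> (i::nat) = x ^ i" for x :: 'a and i
    by (induction i) (simp_all add: ring_of_type_algebra_def)
  obtain g where g: "carrier (mult_of (ring_of_type_algebra :: 'a ring)) = {g [^]\<^bsub>ring_of_type_algebra\<^esub> i | i::nat. i \<in> UNIV}"
    using R.finite_field_mult_group_has_gen by (auto simp: ring_of_type_algebra_def)
  have "y \<in> carrier (mult_of (ring_of_type_algebra :: 'a ring))" if "y \<noteq> 0" for y :: 'a
    using that by (simp add: ring_of_type_algebra_def)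
  then show ?thesis using g by (auto simp: power_eq)
qed

lemma subfield_eq_fixed_points_power_card:
  fixes K :: "'a::field set"
  assumes K: "is_subfield K" and "finite K"
  shows "K = {x. x ^ card K = x}"
proof -
  let ?Fix = "{x::'a. x ^ card K = x}"
  have K0: "0 \<in> K" and K1: "1 \<in> K" and Kmul: "\<forall>x\<in>K. \<forall>y\<in>K. x * y \<in> K"
    using K unfolding is_subfield_def by auto
  have Kinv: "\<forall>x\<in>K. inverse x \<in> K"
    using K unfolding is_subfield_def by (metis inverse_zero)
  have "card {0::'a, 1} \<le> card K" using K0 K1 \<open>finite K\<close> by (intro card_mono) auto
  then have q2: "card K \<ge> 2" by simp
  define P where "P = monom (1::'a) (card K) - [:0, 1:]"
  have "coeff P (card K) = 1" using q2 by (simp add: P_def coeff_eq_0)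
  then have "P \<noteq> 0" by auto
  have "degree P \<le> card K"
    unfolding P_def using q2 by (intro degree_diff_le) (auto simp: degree_monom_le)
  have roots: "{x. poly P x = 0} = ?Fix" by (auto simp: P_def poly_monom)
  have "finite ?Fix"
    using poly_roots_finite[OF \<open>P \<noteq> 0\<close>] unfolding roots .
  moreover have "card ?Fix \<le> card K"
    using card_poly_roots_bound[OF \<open>P \<noteq> 0\<close>] \<open>degree P \<le> card K\<close> unfolding roots by linarith
  moreover have "K \<subseteq> ?Fix"
    using power_card_mult_closed[OF \<open>finite K\<close> K0 Kmul Kinv] by auto
  ultimately show ?thesis using card_seteq by blast
qed

locale field_endo =
  fixes h :: "'a::field \<Rightarrow> 'a"
  assumes add: "h (x + y) = h x + h y" and mult: "h (x * y) = h x * h y" and one: "h 1 = 1"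
begin

lemma zero [simp]: "h 0 = 0"
  using add[of 0 0] by (metis add_cancel_right_right)

lemma uminus [simp]: "h (- x) = - h x"
  using add[of x "- x"] by (simp add: eq_neg_iff_add_eq_0 add.commute)

lemma nonzero: "x \<noteq> 0 \<Longrightarrow> h x \<noteq> 0"
  using mult[of x "inverse x"] one by auto

lemma sum: "h (sum f A) = (\<Sum>i\<in>A. h (f i))"
  by (induction A rule: infinite_finite_induct) (auto simp: add)

lemma power: "h (x ^ n) = h x ^ n"
  by (induction n) (auto simp: mult one)

lemma map_poly_mult: "map_poly h (p * q) = map_poly h p * map_poly h q"
  by (rule poly_eqI) (simp add: coeff_map_poly coeff_mult sum mult)

lemma map_poly_prod: "map_poly h (prod f A) = (\<Prod>i\<in>A. map_poly h (f i))"
  by (induction A rule: infinite_finite_induct) (auto simp: map_poly_mult map_poly_pCons one)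

lemma poly_map_poly: "h (poly p x) = poly (map_poly h p) (h x)"
  by (simp add: poly_altdef sum mult power coeff_map_poly degree_map_poly nonzero)

lemma map_poly_orbit_poly:
  assumes step: "\<And>j. h (r j) = r (Suc j)" and cycle: "r m = r 0"
  shows "map_poly h (\<Prod>j<m. [:- r j, 1:]) = (\<Prod>j<m. [:- r j, 1:])"
proof (cases m)
  case (Suc m')
  define F where "F j = [:- r j, 1:]" for j
  have "map_poly h (\<Prod>j<m. F j) = (\<Prod>j<Suc m'. F (Suc j))"
    unfolding map_poly_prod Suc[symmetric] by (simp add: F_def map_poly_pCons one step)
  also have "\<dots> = F 0 * (\<Prod>j<m'. F (Suc j))"
    using cycle by (simp add: Suc F_def mult.commute)
  also have "\<dots> = (\<Prod>j<m. F j)"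
    unfolding Suc by (rule prod.lessThan_Suc_shift[symmetric])
  finally show ?thesis by (simp add: F_def)
qed (simp add: one)

end

lemma field_endo_power_card_subfield:
  fixes K :: "'a::{finite,field} set"
  assumes "is_subfield K"
  shows "field_endo (\<lambda>x::'a. x ^ card K)"
proof -
  have "0 \<in> K" "\<forall>x\<in>K. \<forall>y\<in>K. x + y \<in> K" using assms unfolding is_subfield_def by auto
  moreover have p: "prime CHAR('a)" by (intro prime_CHAR_semidom finite_imp_CHAR_pos) simp
  ultimately obtain k where "card K = CHAR('a) ^ k" using card_add_closed_CHAR_power[of K] by auto
  then show ?thesis by unfold_locales (simp_all add: freshmans_dream'[OF p] power_mult_distrib)
qed

lemma coeff_frobenius_orbit_poly_mem_subfield:
  fixes K :: "'a::{finite,field} set"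
  assumes K: "is_subfield K" and "g ^ (card K ^ m) = g"
  shows "coeff (\<Prod>j<m. [:- (g ^ (card K ^ j)), 1:]) i \<in> K"
proof -
  interpret Fr: field_endo "\<lambda>x::'a. x ^ card K" by (rule field_endo_power_card_subfield[OF K])
  let ?f = "\<Prod>j<m. [:- (g ^ (card K ^ j)), 1:]"
  have "map_poly (\<lambda>x. x ^ card K) ?f = ?f"
    by (rule Fr.map_poly_orbit_poly) (simp_all add: assms(2) power_mult[symmetric] mult.commute)
  then have "coeff ?f i ^ card K = coeff ?f i"
    by (metis (no_types, lifting) Fr.zero coeff_map_poly)
  then show ?thesis using subfield_eq_fixed_points_power_card[OF K finite] by blast
qed

lemma field_endo_fixing_subfield_is_frobenius_power:
  fixes K :: "'a::{finite,field} set"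
  assumes K: "is_subfield K" and card_UNIV: "card (UNIV :: 'a set) = card K ^ m" and "m \<ge> 1"
    and "field_endo \<psi>" and fixes_K: "\<forall>c\<in>K. \<psi> c = c"
  shows "\<exists>j<m. \<forall>\<mu>. \<psi> \<mu> = \<mu> ^ (card K ^ j)"
proof -
  interpret \<psi>: field_endo \<psi> by fact
  let ?q = "card K"
  obtain g :: 'a where gen: "\<And>y. y \<noteq> 0 \<Longrightarrow> \<exists>i. y = g ^ i"
    using finite_field_has_generator by blast
  define f where "f = (\<Prod>j<m. [:- (g ^ (?q ^ j)), 1:])"
  have "g ^ (?q ^ m) = g" using power_card_mult_closed[of UNIV g] card_UNIV by simp
  then have "map_poly \<psi> f = f"
    unfolding f_def using fixes_K coeff_frobenius_orbit_poly_mem_subfield[OF K]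
    by (intro poly_eqI) (simp add: coeff_map_poly)
  moreover have poly_f: "poly f y = (\<Prod>j<m. y - g ^ (?q ^ j))" for y by (simp add: f_def poly_prod)
  then have "poly f g = 0" using \<open>m \<ge> 1\<close> by (auto simp: prod_zero_iff intro!: bexI[of _ 0])
  ultimately have "poly f (\<psi> g) = 0" using \<psi>.poly_map_poly[of f g] by simp
  then obtain j where "j < m" and \<psi>g: "\<psi> g = g ^ (?q ^ j)"
    unfolding poly_f by (auto simp: prod_zero_iff)
  have "?q > 0" using K unfolding is_subfield_def by (auto simp: card_gt_0_iff)
  have "\<psi> \<mu> = \<mu> ^ (?q ^ j)" for \<mu>
  proof (cases "\<mu> = 0")
    case False
    then obtain i where "\<mu> = g ^ i" using gen by blast
    then show ?thesis by (simp add: \<psi>.power \<psi>g flip: power_mult) (simp add: mult.commute)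
  qed (simp add: \<open>?q > 0\<close>)
  then show ?thesis using \<open>j < m\<close> by blast
qed

lemma map_vadd:
  assumes "\<And>x y. \<phi> (x + y) = \<phi> x + \<phi> y" and "length u = length v"
  shows "map \<phi> (vadd u v) = vadd (map \<phi> u) (map \<phi> v)"
  using assms(2) unfolding vadd_def by (induction u v rule: list_induct2) (auto simp: assms(1))

lemma map_vsmult:
  assumes "\<And>x. \<phi> (a' * x) = a * \<phi> x"
  shows "map \<phi> (vsmult a' v) = vsmult a (map \<phi> v)"
  by (simp add: vsmult_def assms)

lemma is_subspace_range_pair:
  "is_subspace 2 (range (\<lambda>a. [a, a * x :: 'a::field]))"
  unfolding is_subspace_def
proof (intro conjI ballI allI)
  show "replicate 2 0 \<in> range (\<lambda>a. [a, a * x])"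
    by (rule image_eqI[of _ _ 0]) (simp_all add: numeral_2_eq_2)
qed (auto simp: vadd_def vsmult_def algebra_simps intro!: image_eqI)

lemma fully_linear_mult:
  assumes "fully_linear \<phi>" and "inj \<phi>" and "\<phi> 1 \<noteq> 0"
  shows "\<phi> (a * x) = \<phi> a * \<phi> x / \<phi> 1"
proof -
  let ?C = "range (\<lambda>a. [a, a * x])"
  have "is_subspace 2 (map \<phi> ` ?C)"
    using assms(1) is_subspace_range_pair[of x] unfolding fully_linear_def linear_on_code_def
    by (metis one_le_numeral)
  moreover have "map \<phi> [1, x] \<in> map \<phi> ` ?C" by (auto intro!: image_eqI[of _ _ "[1, 1 * x]"])
  ultimately have "vsmult (\<phi> a / \<phi> 1) (map \<phi> [1, x]) \<in> map \<phi> ` ?C"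
    unfolding is_subspace_def by blast
  then obtain b where "\<phi> b = \<phi> a" "\<phi> (b * x) = \<phi> a / \<phi> 1 * \<phi> x"
    using assms(3) by (auto simp: vsmult_def)
  then show ?thesis using \<open>inj \<phi>\<close> by (simp add: inj_eq)
qed

lemma fully_linear_if_scalars_lift:
  fixes \<phi> :: "'a::field \<Rightarrow> 'a"
  assumes add: "\<And>x y. \<phi> (x + y) = \<phi> x + \<phi> y" and lift: "\<And>a. \<exists>a'. \<forall>x. \<phi> (a' * x) = a * \<phi> x"
  shows "fully_linear \<phi>"
  unfolding fully_linear_def linear_on_code_def
proof (intro allI impI)
  fix n and C :: "'a list set" assume "is_subspace n C"
  then have len: "\<And>v. v \<in> C \<Longrightarrow> length v = n" and "replicate n 0 \<in> C"
    and Cadd: "\<And>u v. u \<in> C \<Longrightarrow> v \<in> C \<Longrightarrow> vadd u v \<in> C"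
    and Csmult: "\<And>a v. v \<in> C \<Longrightarrow> vsmult a v \<in> C"
    unfolding is_subspace_def by auto
  have "\<phi> 0 = 0" using add[of 0 0] by (metis add_cancel_right_right)
  show "is_subspace n (map \<phi> ` C)"
    unfolding is_subspace_def
  proof (intro conjI ballI allI)
    show "replicate n 0 \<in> map \<phi> ` C"
      using \<open>replicate n 0 \<in> C\<close> \<open>\<phi> 0 = 0\<close> by (intro image_eqI[of _ _ "replicate n 0"]) auto
    fix u v assume "u \<in> map \<phi> ` C" "v \<in> map \<phi> ` C"
    then obtain u' v' where "u' \<in> C" "v' \<in> C" "u = map \<phi> u'" "v = map \<phi> v'" by blast
    then show "vadd u v \<in> map \<phi> ` C"
      using Cadd len map_vadd[of \<phi>, OF add] by (metis imageI)
  next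
    fix a v assume "v \<in> map \<phi> ` C"
    then obtain v' where "v' \<in> C" "v = map \<phi> v'" by blast
    obtain a' where "\<And>x. \<phi> (a' * x) = a * \<phi> x" using lift by blast
    then have "vsmult a v = map \<phi> (vsmult a' v')" using map_vsmult \<open>v = map \<phi> v'\<close> by metis
    then show "vsmult a v \<in> map \<phi> ` C" using Csmult \<open>v' \<in> C\<close> by blast
  qed (use len in auto)
qed

theorem mainTheorem4:
  fixes K :: "'a::{finite,field} set" and q m :: nat and \<phi> :: "'a \<Rightarrow> 'a"
  assumes "is_subfield K" and "card K = q" and "card (UNIV :: 'a set) = q ^ m" and "m \<ge> 1"
    and "lin_aut K \<phi>"
  shows "fully_linear \<phi> \<longleftrightarrow>
    (\<exists>\<beta> j. \<beta> \<noteq> 0 \<and> j < m \<and> (\<forall>\<mu>. \<phi> \<mu> = \<beta> * \<mu> ^ (q ^ j)))"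
proof -
  have bij: "bij \<phi>" and add: "\<And>x y. \<phi> (x + y) = \<phi> x + \<phi> y"
    and hom: "\<And>c x. c \<in> K \<Longrightarrow> \<phi> (c * x) = c * \<phi> x"
    using assms(5) unfolding lin_aut_def by auto
  have "\<phi> 1 \<noteq> 0" using bij add[of 0 0] by (metis add_cancel_right_right bij_is_inj inj_eq zero_neq_one)
  show ?thesis
  proof
    assume "fully_linear \<phi>"
    then have "field_endo (\<lambda>x. \<phi> x / \<phi> 1)"
      using fully_linear_mult[OF _ bij_is_inj[OF bij]] \<open>\<phi> 1 \<noteq> 0\<close>
      by unfold_locales (simp_all add: add add_divide_distrib)
    moreover have "\<forall>c\<in>K. \<phi> c / \<phi> 1 = c" using hom[of _ 1] \<open>\<phi> 1 \<noteq> 0\<close> by simp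
    ultimately obtain j where "j < m" "\<forall>\<mu>. \<phi> \<mu> / \<phi> 1 = \<mu> ^ (q ^ j)"
      using field_endo_fixing_subfield_is_frobenius_power[OF assms(1)] assms(2-4) by blast
    then show "\<exists>\<beta> j. \<beta> \<noteq> 0 \<and> j < m \<and> (\<forall>\<mu>. \<phi> \<mu> = \<beta> * \<mu> ^ (q ^ j))"
      using \<open>\<phi> 1 \<noteq> 0\<close> by (metis nonzero_eq_divide_eq mult.commute)
  next
    assume "\<exists>\<beta> j. \<beta> \<noteq> 0 \<and> j < m \<and> (\<forall>\<mu>. \<phi> \<mu> = \<beta> * \<mu> ^ (q ^ j))"
    then obtain \<beta> j where "\<beta> \<noteq> 0" and \<phi>: "\<And>\<mu>. \<phi> \<mu> = \<beta> * \<mu> ^ (q ^ j)" by blast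
    have "\<exists>a'. \<forall>x. \<phi> (a' * x) = a * \<phi> x" for a
    proof -
      obtain a' where "\<phi> a' = \<beta> * a" using bij by (metis bij_pointE)
      then have "a' ^ (q ^ j) = a" using \<phi>[of a'] \<open>\<beta> \<noteq> 0\<close> by simp
      then show ?thesis by (auto simp: \<phi> power_mult_distrib)
    qed
    then show "fully_linear \<phi>" by (rule fully_linear_if_scalars_lift[OF add])
  qed
qed

end
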